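(* Let $H$ be a complex Hilbert space, let $P \in \mathcal{L}(H)$ be a positive operator (i.e. $\langle Px,x\rangle \ge 0$ for all $x\in H$), and let $n$ be a positive integer. Then: (i) $P$ satisfies the property $\mathcal{N}$ if and only if $P^n$ satisfies the property $\mathcal{N}$; (ii) $P$ satisfies the property $\mathcal{N}^*$ if and only if $P^n$ satisfies the property $\mathcal{N}^*$.
   Context: $\mathcal{L}(H)$ is the space of bounded linear operators on $H$. An operator $T \in \mathcal{L}(H)$ satisfies the property $\mathcal{N}$ if there exists $x_0 \in H$ with $\|x_0\|=1$ and $\|Tx_0\| = \|T\|$. With $[T] := \inf_{\|x\| = 1} \|Tx\|$, $T$ satisfies the property $\mathcal{N}^*$ if there exists $x_0 \in H$ with $\|x_0\| = 1$ and $\|Tx_0\| = [T]$. *)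

theory Defs
  imports "HOL-Analysis.Analysis" "HOL-Library.Complex_Order"
begin

text \<open>Complex inner product spaces (HOL provides only real ones).
  The inner product is conjugate-linear in the first argument and linear in the second.\<close>
class complex_inner = real_normed_vector +
  fixes scaleC :: "complex \<Rightarrow> 'a \<Rightarrow> 'a" (infixr "*\<^sub>C" 75)
    and cinner :: "'a \<Rightarrow> 'a \<Rightarrow> complex"
  assumes scaleC_add_right: "a *\<^sub>C (x + y) = a *\<^sub>C x + a *\<^sub>C y"
    and scaleC_add_left: "(a + b) *\<^sub>C x = a *\<^sub>C x + b *\<^sub>C x"
    and scaleC_scaleC: "a *\<^sub>C (b *\<^sub>C x) = (a * b) *\<^sub>C x"
    and scaleC_one: "1 *\<^sub>C x = x"
    and scaleR_scaleC: "scaleR r x = complex_of_real r *\<^sub>C x"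
    and cinner_commute: "cinner x y = cnj (cinner y x)"
    and cinner_add_left: "cinner (x + y) z = cinner x z + cinner y z"
    and cinner_scaleC_left: "cinner (a *\<^sub>C x) y = cnj a * cinner x y"
    and cinner_ge_zero: "0 \<le> cinner x x"
    and cinner_eq_zero_iff: "cinner x x = 0 \<longleftrightarrow> x = 0"
    and norm_eq_sqrt_cinner: "norm x = sqrt (Re (cinner x x))"

class chilbert_space = complex_inner + complete_space

definition bounded_clinear :: "('a::complex_inner \<Rightarrow> 'b::complex_inner) \<Rightarrow> bool" where
  "bounded_clinear T \<longleftrightarrow> bounded_linear T \<and> (\<forall>c x. T (c *\<^sub>C x) = c *\<^sub>C T x)"

text \<open>Positive operator: <Px,x> >= 0 for all x (order on complex from Complex_Order).\<close>
definition positive_op :: "('a::complex_inner \<Rightarrow> 'a) \<Rightarrow> bool" where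
  "positive_op P \<longleftrightarrow> (\<forall>x. 0 \<le> cinner x (P x))"

definition min_modulus :: "('a::real_normed_vector \<Rightarrow> 'b::real_normed_vector) \<Rightarrow> real" where
  "min_modulus T = (INF x\<in>{x. norm x = 1}. norm (T x))"

definition property_N :: "('a::real_normed_vector \<Rightarrow> 'b::real_normed_vector) \<Rightarrow> bool" where
  "property_N T \<longleftrightarrow> (\<exists>x0. norm x0 = 1 \<and> norm (T x0) = onorm T)"

definition property_N_star :: "('a::real_normed_vector \<Rightarrow> 'b::real_normed_vector) \<Rightarrow> bool" where
  "property_N_star T \<longleftrightarrow> (\<exists>x0. norm x0 = 1 \<and> norm (T x0) = min_modulus T)"

end

theory Submission
  imports Defs
begin

text \<open>
  For a positive operator \<open>P\<close> the sequence \<open>\<parallel>P\<^sup>k x\<parallel>\<close> is log-convex (Cauchy--Schwarz and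
  self-adjointness give \<open>\<parallel>P\<^sup>k\<^sup>+\<^sup>1x\<parallel>\<^sup>2 \<le> \<parallel>P\<^sup>kx\<parallel> \<parallel>P\<^sup>k\<^sup>+\<^sup>2x\<parallel>\<close>), hence \<open>\<parallel>Px\<parallel>\<^sup>n \<le> \<parallel>P\<^sup>nx\<parallel>\<close> for unit \<open>x\<close>.
  This yields \<open>\<parallel>P\<^sup>n\<parallel> = \<parallel>P\<parallel>\<^sup>n\<close>, and comparing \<open>\<parallel>P\<^sup>nx\<parallel>\<close> with \<open>\<parallel>P\<parallel>\<^sup>n\<^sup>-\<^sup>1\<parallel>Px\<parallel>\<close> shows that
  \<open>x\<close> is a norming vector of \<open>P\<close> iff it is one of \<open>P\<^sup>n\<close>.

  For the minimum modulus \<open>m = [P]\<close> the operator \<open>Q = P\<^sup>2 - m\<^sup>2\<close> is positive, so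
  \<open>\<parallel>Qx\<parallel>\<^sup>2 \<le> \<parallel>Q\<parallel> \<langle>Qx,x\<rangle>\<close>; together with \<open>\<parallel>(P + m)z\<parallel> \<ge> m\<parallel>z\<parallel>\<close> this bounds \<open>m\<parallel>Px - mx\<parallel>\<close>
  by \<open>\<parallel>Px\<parallel>\<^sup>2 - m\<^sup>2\<close>. Consequently a unit vector with \<open>\<parallel>Px\<parallel> = m\<close> is an eigenvector for \<open>m\<close>, and
  almost minimising unit vectors are approximate eigenvectors, which gives \<open>[P\<^sup>n] = [P]\<^sup>n\<close>.
\<close>

lemma cinner_add_right: "cinner x (y + z) = cinner x y + cinner (x::'a::complex_inner) z"
  by (metis cinner_add_left cinner_commute complex_cnj_add)

lemma cinner_scaleC_right: "cinner x (a *\<^sub>C y) = a * cinner (x::'a::complex_inner) y"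
  by (metis cinner_commute cinner_scaleC_left complex_cnj_cnj complex_cnj_mult)

lemma cinner_scaleR_left: "cinner (r *\<^sub>R x) y = complex_of_real r * cinner (x::'a::complex_inner) y"
  by (simp add: scaleR_scaleC cinner_scaleC_left)

lemma cinner_scaleR_right: "cinner x (r *\<^sub>R y) = complex_of_real r * cinner (x::'a::complex_inner) y"
  by (simp add: scaleR_scaleC cinner_scaleC_right)

lemma cinner_diff_left: "cinner (x - y) z = cinner x z - cinner (y::'a::complex_inner) z"
  using cinner_add_left[of x "- y" z] cinner_scaleR_left[of "- 1" y z] by simp

lemma cinner_diff_right: "cinner x (y - z) = cinner x y - cinner (x::'a::complex_inner) z"
  using cinner_add_right[of x y "- z"] cinner_scaleR_right[of x "- 1" z] by simp

lemma Re_cinner_commute: "Re (cinner x y) = Re (cinner y (x::'a::complex_inner))"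
  by (subst cinner_commute) simp

lemma Re_cinner_self: "Re (cinner x x) = (norm (x::'a::complex_inner))\<^sup>2"
proof -
  have "0 \<le> Re (cinner x x)" using cinner_ge_zero[of x] by (simp add: less_eq_complex_def)
  then show ?thesis by (simp add: norm_eq_sqrt_cinner)
qed

lemma Re_cinner_cauchy_schwarz:
  fixes Q :: "'a::complex_inner \<Rightarrow> 'a"
  assumes "linear Q"
    and sym: "\<And>x y. Re (cinner x (Q y)) = Re (cinner (Q x) y)"
    and pos: "\<And>x. 0 \<le> Re (cinner x (Q x))"
  shows "(Re (cinner a (Q b)))\<^sup>2 \<le> Re (cinner a (Q a)) * Re (cinner b (Q b))"
proof -
  define A B C where "A = Re (cinner a (Q a))" and "B = Re (cinner a (Q b))"
    and "C = Re (cinner b (Q b))"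
  have "Re (cinner b (Q a)) = B" unfolding B_def by (metis sym Re_cinner_commute)
  then have quadratic_nonneg: "0 \<le> A + 2 * t * B + t\<^sup>2 * C" for t
    using pos[of "a + t *\<^sub>R b"] \<open>linear Q\<close>
    by (simp add: linear_add linear_cmul cinner_add_left cinner_add_right cinner_scaleR_left
        cinner_scaleR_right A_def B_def C_def power2_eq_square algebra_simps)
  show ?thesis
  proof (cases "C = 0")
    case True
    have "B = 0"
    proof (rule ccontr)
      assume "B \<noteq> 0"
      then have "A + 2 * (- (A + 1) / (2 * B)) * B = -1" by (simp add: field_simps)
      with quadratic_nonneg[of "- (A + 1) / (2 * B)"] True show False by simp
    qed
    with True show ?thesis by (simp add: A_def B_def C_def)
  next
    case False
    then have "C > 0" using pos[of b] C_def by simp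
    have "A + 2 * (- B / C) * B + (- B / C)\<^sup>2 * C = A - B\<^sup>2 / C"
      using \<open>C > 0\<close> by (simp add: field_simps power2_eq_square)
    with quadratic_nonneg[of "- B / C"] have "B\<^sup>2 / C \<le> A" by simp
    with \<open>C > 0\<close> show ?thesis by (simp add: A_def B_def C_def divide_le_eq mult.commute)
  qed
qed

lemma Re_cinner_le_norm_mult: "\<bar>Re (cinner a b)\<bar> \<le> norm a * norm (b::'a::complex_inner)"
proof -
  have "(Re (cinner a b))\<^sup>2 \<le> Re (cinner a a) * Re (cinner b b)"
    using Re_cinner_cauchy_schwarz[OF bounded_linear.linear[OF bounded_linear_ident]]
    by (simp add: Re_cinner_self)
  then have "\<bar>Re (cinner a b)\<bar>\<^sup>2 \<le> (norm a * norm b)\<^sup>2"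
    by (simp add: Re_cinner_self power_mult_distrib)
  then show ?thesis by (rule power2_le_imp_le) simp
qed

text \<open>Cauchy--Schwarz for the semi-inner product \<open>\<langle>u,Qv\<rangle>\<close>, applied to \<open>x\<close> and \<open>Qx\<close>.\<close>
lemma norm_power2_le_Re_cinner:
  fixes Q :: "'a::complex_inner \<Rightarrow> 'a"
  assumes "linear Q"
    and sym: "\<And>x y. Re (cinner x (Q y)) = Re (cinner (Q x) y)"
    and pos: "\<And>x. 0 \<le> Re (cinner x (Q x))"
    and bound: "\<And>y. norm (Q y) \<le> K * norm y" and "0 \<le> K"
  shows "(norm (Q x))\<^sup>2 \<le> K * Re (cinner x (Q x))"
proof -
  define R where "R = Re (cinner x (Q x))"
  have "(norm (Q x))\<^sup>2 * (norm (Q x))\<^sup>2 = (Re (cinner x (Q (Q x))))\<^sup>2"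
    by (simp add: sym Re_cinner_self power2_eq_square)
  also have "\<dots> \<le> R * Re (cinner (Q x) (Q (Q x)))"
    unfolding R_def by (rule Re_cinner_cauchy_schwarz[OF assms(1-3)])
  also have "\<dots> \<le> R * (norm (Q x) * (K * norm (Q x)))"
  proof (rule mult_left_mono)
    have "Re (cinner (Q x) (Q (Q x))) \<le> norm (Q x) * norm (Q (Q x))"
      using Re_cinner_le_norm_mult[of "Q x" "Q (Q x)"] by linarith
    also have "\<dots> \<le> norm (Q x) * (K * norm (Q x))" by (simp add: bound mult_left_mono)
    finally show "Re (cinner (Q x) (Q (Q x))) \<le> norm (Q x) * (K * norm (Q x))" .
    show "0 \<le> R" using pos R_def by simp
  qed
  finally have "(norm (Q x))\<^sup>2 * (norm (Q x))\<^sup>2 \<le> (K * R) * (norm (Q x))\<^sup>2"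
    by (simp add: power2_eq_square algebra_simps)
  then show ?thesis
  proof (cases "Q x = 0")
    case False
    then have "0 < (norm (Q x))\<^sup>2" by simp
    with \<open>_ \<le> (K * R) * _\<close> show ?thesis unfolding R_def by (rule mult_right_le_imp_le)
  qed (use pos[of x] \<open>0 \<le> K\<close> R_def in simp)
qed

lemma bounded_linear_funpow:
  "bounded_linear (T::'a::real_normed_vector \<Rightarrow> 'a) \<Longrightarrow> bounded_linear (T ^^ k)"
  by (induction k) (simp_all add: id_def comp_def bounded_linear_ident bounded_linear_compose)

lemma norm_funpow_le:
  fixes T :: "'a::real_normed_vector \<Rightarrow> 'a"
  assumes bound: "\<And>y. norm (T y) \<le> B * norm y" and "0 \<le> B"
  shows "norm ((T ^^ k) y) \<le> B ^ k * norm y"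
proof (induction k)
  case (Suc k)
  have "norm ((T ^^ Suc k) y) \<le> B * norm ((T ^^ k) y)" by (simp add: bound)
  also have "\<dots> \<le> B * (B ^ k * norm y)" using Suc \<open>0 \<le> B\<close> by (rule mult_left_mono)
  finally show ?case by simp
qed simp

lemma onorm_funpow_le:
  "bounded_linear (T::'a::real_normed_vector \<Rightarrow> 'a) \<Longrightarrow> onorm (T ^^ k) \<le> onorm T ^ k"
  by (intro onorm_bound norm_funpow_le onorm onorm_pos_le zero_le_power)

lemma funpow_eigenvector:
  "linear T \<Longrightarrow> T x = c *\<^sub>R x \<Longrightarrow> (T ^^ k) x = c ^ k *\<^sub>R x"
  by (induction k) (simp_all add: linear_cmul)

lemma norm_funpow_diff_power_le:
  fixes T :: "'a::real_normed_vector \<Rightarrow> 'a"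
  assumes "bounded_linear T" and bound: "\<And>y. norm (T y) \<le> B * norm y" and "0 \<le> c" "c \<le> B"
  shows "norm ((T ^^ Suc k) x - c ^ Suc k *\<^sub>R x) \<le> real (Suc k) * B ^ k * norm (T x - c *\<^sub>R x)"
proof (induction k)
  case (Suc k)
  define \<eta> where "\<eta> = norm (T x - c *\<^sub>R x)"
  have "linear (T ^^ Suc k)"
    using bounded_linear.linear[OF bounded_linear_funpow[OF \<open>bounded_linear T\<close>]] .
  then have "(T ^^ Suc k) (T x) - c ^ Suc (Suc k) *\<^sub>R x
      = (T ^^ Suc k) (T x - c *\<^sub>R x) + c *\<^sub>R ((T ^^ Suc k) x - c ^ Suc k *\<^sub>R x)"
    by (simp add: linear_diff linear_cmul algebra_simps del: funpow.simps)
  moreover have "(T ^^ Suc (Suc k)) x = (T ^^ Suc k) (T x)"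
    by (simp only: funpow_Suc_right o_def)
  ultimately have "norm ((T ^^ Suc (Suc k)) x - c ^ Suc (Suc k) *\<^sub>R x)
      \<le> norm ((T ^^ Suc k) (T x - c *\<^sub>R x)) + c * norm ((T ^^ Suc k) x - c ^ Suc k *\<^sub>R x)"
    using norm_triangle_ineq \<open>0 \<le> c\<close> by (metis abs_of_nonneg norm_scaleR)
  also have "\<dots> \<le> B ^ Suc k * \<eta> + c * (real (Suc k) * B ^ k * \<eta>)"
  proof (rule add_mono)
    show "norm ((T ^^ Suc k) (T x - c *\<^sub>R x)) \<le> B ^ Suc k * \<eta>"
      unfolding \<eta>_def using bound \<open>0 \<le> c\<close> \<open>c \<le> B\<close> by (intro norm_funpow_le) simp_all
  qed (use Suc \<open>0 \<le> c\<close> \<eta>_def in \<open>simp add: mult_left_mono\<close>)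
  also have "\<dots> \<le> B ^ Suc k * \<eta> + B * (real (Suc k) * B ^ k * \<eta>)"
    using \<open>c \<le> B\<close> \<open>0 \<le> c\<close> unfolding \<eta>_def by (intro add_mono mult_right_mono) simp_all
  also have "\<dots> = real (Suc (Suc k)) * B ^ Suc k * \<eta>" by (simp add: algebra_simps)
  finally show ?case unfolding \<eta>_def .
qed simp

lemma positive_op_Re_cinner_nonneg: "positive_op P \<Longrightarrow> 0 \<le> Re (cinner x (P x))"
  unfolding positive_op_def by (metis less_eq_complex_def zero_complex.sel(1))

lemma positive_op_Im_cinner: "positive_op P \<Longrightarrow> Im (cinner x (P x)) = 0"
  unfolding positive_op_def by (metis less_eq_complex_def zero_complex.sel(2))

text \<open>Polarisation: \<open>\<langle>x,Py\<rangle>\<close> and \<open>\<langle>y,Px\<rangle>\<close> are compared through the quadratic form at \<open>x + y\<close>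
  and \<open>x + iy\<close>, which is real by positivity.\<close>
lemma positive_op_Re_cinner_commute:
  fixes P :: "'a::complex_inner \<Rightarrow> 'a"
  assumes "bounded_clinear P" and pos: "positive_op P"
  shows "Re (cinner x (P y)) = Re (cinner (P x) y)"
proof -
  interpret bounded_linear P using assms(1) unfolding bounded_clinear_def by simp
  have scaleC: "P (c *\<^sub>C z) = c *\<^sub>C P z" for c z using assms(1) unfolding bounded_clinear_def by simp
  define B where "B u v = cinner u (P v)" for u v
  have real: "Im (B z z) = 0" for z unfolding B_def by (rule positive_op_Im_cinner[OF pos])
  have "B (x + y) (x + y) = B x x + B x y + B y x + B y y"
    unfolding B_def by (simp add: add cinner_add_left cinner_add_right)
  then have "Im (B x y) + Im (B y x) = 0" using real[of "x + y"] real[of x] real[of y] by simp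
  moreover have "B (x + \<i> *\<^sub>C y) (x + \<i> *\<^sub>C y)
      = B x x + \<i> * B x y - \<i> * B y x + B (\<i> *\<^sub>C y) (\<i> *\<^sub>C y)"
    unfolding B_def
    by (simp add: add scaleC cinner_add_left cinner_add_right cinner_scaleC_left
        cinner_scaleC_right algebra_simps)
  then have "Re (B x y) - Re (B y x) = 0"
    using real[of "x + \<i> *\<^sub>C y"] real[of x] real[of "\<i> *\<^sub>C y"] by simp
  ultimately show ?thesis unfolding B_def by (metis Re_cinner_commute eq_iff_diff_eq_0)
qed

lemma min_modulus_le: "norm x = 1 \<Longrightarrow> min_modulus T \<le> norm (T x)"
  unfolding min_modulus_def by (rule cINF_lower) (auto intro: bdd_belowI[of _ 0])

lemma min_modulus_greatest:
  fixes T :: "'a::real_normed_vector \<Rightarrow> 'b::real_normed_vector"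
  assumes "\<exists>u::'a. norm u = 1"
    and "\<And>x. norm x = 1 \<Longrightarrow> c \<le> norm (T x)"
  shows "c \<le> min_modulus T"
  unfolding min_modulus_def using assms by (intro cINF_greatest) auto

lemma min_modulus_nonneg:
  fixes T :: "'a::real_normed_vector \<Rightarrow> 'b::real_normed_vector"
  shows "\<exists>u::'a. norm u = 1 \<Longrightarrow> 0 \<le> min_modulus T"
  by (rule min_modulus_greatest) auto

lemma min_modulus_lessE:
  fixes T :: "'a::real_normed_vector \<Rightarrow> 'b::real_normed_vector"
  assumes "\<exists>u::'a. norm u = 1" and "min_modulus T < a"
  obtains x where "norm x = 1" "norm (T x) < a"
  using assms unfolding min_modulus_def
  by (subst (asm) cINF_less_iff) (auto intro: bdd_belowI[of _ 0])

lemma min_modulus_mult_norm_le: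
  assumes "linear T"
  shows "min_modulus T * norm y \<le> norm (T y)"
proof (cases "y = 0")
  case False
  then have "min_modulus T \<le> norm (T ((1 / norm y) *\<^sub>R y))"
    by (intro min_modulus_le) simp
  with False show ?thesis by (simp add: linear_cmul[OF assms] le_divide_eq)
qed (simp add: linear_0[OF assms])

lemma power_min_modulus_le_min_modulus_funpow:
  fixes T :: "'a::real_normed_vector \<Rightarrow> 'a"
  assumes "linear T" and unit: "\<exists>u::'a. norm u = 1"
  shows "min_modulus T ^ k \<le> min_modulus (T ^^ k)"
proof (rule min_modulus_greatest[OF unit])
  have "min_modulus T ^ k * norm y \<le> norm ((T ^^ k) y)" for y
  proof (induction k)
    case (Suc k)
    have "min_modulus T ^ Suc k * norm y \<le> min_modulus T * norm ((T ^^ k) y)"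
      using mult_left_mono[OF Suc min_modulus_nonneg[OF unit, of T]] by (simp add: mult.assoc)
    also have "\<dots> \<le> norm ((T ^^ Suc k) y)"
      using min_modulus_mult_norm_le[OF \<open>linear T\<close>] by simp
    finally show ?case .
  qed simp
  then show "min_modulus T ^ k \<le> norm ((T ^^ k) x)" if "norm x = 1" for x
    using that by (metis mult.right_neutral)
qed

context
  fixes P :: "'a::complex_inner \<Rightarrow> 'a"
  assumes P_clinear: "bounded_clinear P" and P_pos: "positive_op P"
begin

lemma bounded_linear_P: "bounded_linear P"
  using P_clinear unfolding bounded_clinear_def by simp

lemma linear_P: "linear P"
  by (rule bounded_linear.linear[OF bounded_linear_P])

lemma norm_funpow_Suc_power2_le:
  "(norm ((P ^^ Suc k) x))\<^sup>2 \<le> norm ((P ^^ k) x) * norm ((P ^^ Suc (Suc k)) x)"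
proof -
  have "(norm ((P ^^ Suc k) x))\<^sup>2 = Re (cinner (P ((P ^^ k) x)) ((P ^^ Suc k) x))"
    by (simp add: Re_cinner_self)
  also have "\<dots> = Re (cinner ((P ^^ k) x) (P ((P ^^ Suc k) x)))"
    by (simp add: positive_op_Re_cinner_commute[OF P_clinear P_pos])
  also have "\<dots> \<le> norm ((P ^^ k) x) * norm ((P ^^ Suc (Suc k)) x)"
    using Re_cinner_le_norm_mult[of "(P ^^ k) x" "P ((P ^^ Suc k) x)"] by simp
  finally show ?thesis .
qed

lemma norm_mult_norm_funpow_le:
  assumes "norm x = 1"
  shows "norm (P x) * norm ((P ^^ k) x) \<le> norm ((P ^^ Suc k) x)"
proof (induction k)
  case (Suc k)
  define a b c d where "a = norm (P x)" and "b = norm ((P ^^ k) x)"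
    and "c = norm ((P ^^ Suc k) x)" and "d = norm ((P ^^ Suc (Suc k)) x)"
  have "a * b \<le> c" using Suc unfolding a_def b_def c_def .
  moreover have "c\<^sup>2 \<le> b * d" using norm_funpow_Suc_power2_le unfolding b_def c_def d_def .
  moreover have "0 \<le> a" "0 \<le> d" "0 \<le> c" unfolding a_def c_def d_def by simp_all
  ultimately have "(a * c) * c \<le> d * c"
    using mult_left_mono[of "c\<^sup>2" "b * d" a] mult_right_mono[of "a * b" c d]
    by (simp add: power2_eq_square mult.commute mult.left_commute)
  then have "a * c \<le> d" using \<open>0 \<le> a\<close> \<open>0 \<le> d\<close> \<open>0 \<le> c\<close>
    by (cases "c = 0") simp_all
  then show ?case unfolding a_def c_def d_def .
qed (simp add: assms)

lemma power_norm_le_norm_funpow: "norm x = 1 \<Longrightarrow> norm (P x) ^ k \<le> norm ((P ^^ k) x)"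
proof (induction k)
  case (Suc k)
  then have "norm (P x) * norm (P x) ^ k \<le> norm (P x) * norm ((P ^^ k) x)"
    by (simp add: mult_left_mono)
  also have "\<dots> \<le> norm ((P ^^ Suc k) x)" by (rule norm_mult_norm_funpow_le[OF Suc.prems])
  finally show ?case by simp
qed simp

lemma onorm_funpow:
  assumes "n \<ge> 1"
  shows "onorm (P ^^ n) = onorm P ^ n"
proof (rule antisym)
  show "onorm (P ^^ n) \<le> onorm P ^ n" by (rule onorm_funpow_le[OF bounded_linear_P])
  define c where "c = root n (onorm (P ^^ n))"
  have "0 \<le> onorm (P ^^ n)"
    by (rule onorm_pos_le[OF bounded_linear_funpow[OF bounded_linear_P]])
  then have "0 \<le> c" and c_power: "c ^ n = onorm (P ^^ n)"
    unfolding c_def using assms by (simp_all add: real_root_pow_pos2)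
  have "onorm P \<le> c"
  proof (rule onorm_bound[OF \<open>0 \<le> c\<close>])
    fix x
    show "norm (P x) \<le> c * norm x"
    proof (cases "x = 0")
      case False
      define u where "u = (1 / norm x) *\<^sub>R x"
      have "norm u = 1" using False unfolding u_def by simp
      have Pu: "norm (P u) = norm (P x) / norm x"
        unfolding u_def by (simp add: linear_cmul linear_P)
      have "norm (P u) ^ n \<le> norm ((P ^^ n) u)" by (rule power_norm_le_norm_funpow[OF \<open>norm u = 1\<close>])
      also have "\<dots> \<le> c ^ n"
        using onorm[OF bounded_linear_funpow[OF bounded_linear_P], of n u]
        by (simp add: \<open>norm u = 1\<close> c_power)
      finally have "norm (P u) ^ Suc (n - 1) \<le> c ^ Suc (n - 1)" using assms by simp
      then have "norm (P u) \<le> c" using \<open>0 \<le> c\<close> by (rule power_le_imp_le_base)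
      then show ?thesis using Pu False by (simp add: divide_le_eq mult.commute)
    qed (simp add: linear_0 linear_P)
  qed
  then show "onorm P ^ n \<le> onorm (P ^^ n)"
    using onorm_pos_le[OF bounded_linear_P] c_power by (metis power_mono)
qed

lemma property_N_funpow_iff:
  assumes "n \<ge> 1"
  shows "property_N P \<longleftrightarrow> property_N (P ^^ n)"
proof
  assume "property_N P"
  then obtain x where x: "norm x = 1" "norm (P x) = onorm P" unfolding property_N_def by auto
  have "onorm (P ^^ n) \<le> norm ((P ^^ n) x)"
    using onorm_funpow[OF assms] power_norm_le_norm_funpow[OF x(1)] x(2) by simp
  moreover have "norm ((P ^^ n) x) \<le> onorm (P ^^ n)"
    using onorm[OF bounded_linear_funpow[OF bounded_linear_P], of n x] x(1) by simp
  ultimately have "norm ((P ^^ n) x) = onorm (P ^^ n)" by (rule antisym[rotated])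
  with x(1) show "property_N (P ^^ n)" unfolding property_N_def by blast
next
  assume "property_N (P ^^ n)"
  then obtain x where x: "norm x = 1" "norm ((P ^^ n) x) = onorm (P ^^ n)"
    unfolding property_N_def by auto
  obtain k where "n = Suc k" using assms by (cases n) auto
  define M where "M = onorm P"
  have "0 \<le> M" unfolding M_def by (rule onorm_pos_le[OF bounded_linear_P])
  have "norm (P x) \<le> M"
    using onorm[OF bounded_linear_P, of x] x(1) unfolding M_def by simp
  have "M * M ^ k = norm ((P ^^ k) (P x))"
    using onorm_funpow[OF assms] x(2) \<open>n = Suc k\<close> by (simp add: M_def funpow_swap1)
  also have "\<dots> \<le> M ^ k * norm (P x)"
    by (rule norm_funpow_le[OF _ \<open>0 \<le> M\<close>]) (simp add: M_def onorm bounded_linear_P)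
  finally have "M * M ^ k \<le> M ^ k * norm (P x)" .
  then have "M \<le> norm (P x)"
  proof (cases "M = 0")
    case False
    with \<open>0 \<le> M\<close> have "0 < M ^ k" by simp
    with \<open>M * M ^ k \<le> M ^ k * norm (P x)\<close> show ?thesis
      by (metis mult.commute mult_le_cancel_left_pos)
  qed simp
  with \<open>norm (P x) \<le> M\<close> x(1) show "property_N P"
    unfolding property_N_def M_def by (metis order_antisym)
qed

lemma norm_add_scaleR_ge:
  assumes "0 \<le> m"
  shows "m * norm z \<le> norm (P z + m *\<^sub>R z)"
proof (rule power2_le_imp_le)
  have "(norm (P z + m *\<^sub>R z))\<^sup>2 = Re (cinner (P z + m *\<^sub>R z) (P z + m *\<^sub>R z))"
    by (simp only: Re_cinner_self)
  also have "\<dots> = Re (cinner (P z) (P z)) + 2 * m * Re (cinner z (P z)) + m\<^sup>2 * Re (cinner z z)"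
    by (simp add: cinner_add_left cinner_add_right cinner_scaleR_left cinner_scaleR_right
        Re_cinner_commute[of "P z" z] power2_eq_square algebra_simps)
  finally have "(norm (P z + m *\<^sub>R z))\<^sup>2
      = (norm (P z))\<^sup>2 + 2 * m * Re (cinner z (P z)) + m\<^sup>2 * (norm z)\<^sup>2"
    by (simp only: Re_cinner_self)
  then show "(m * norm z)\<^sup>2 \<le> (norm (P z + m *\<^sub>R z))\<^sup>2"
    using positive_op_Re_cinner_nonneg[OF P_pos, of z] assms by (simp add: power_mult_distrib)
qed simp

text \<open>\<open>Q = P\<^sup>2 - [P]\<^sup>2\<close> is positive because \<open>\<parallel>Py\<parallel> \<ge> [P] \<parallel>y\<parallel>\<close>.\<close>
lemma norm_square_diff_power2_le:
  assumes unit: "\<exists>u::'a. norm u = 1"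
  defines "m \<equiv> min_modulus P"
  shows "(norm (P (P x) - m\<^sup>2 *\<^sub>R x))\<^sup>2 \<le> ((onorm P)\<^sup>2 + m\<^sup>2) * ((norm (P x))\<^sup>2 - m\<^sup>2 * (norm x)\<^sup>2)"
proof -
  interpret bounded_linear P by (rule bounded_linear_P)
  have "0 \<le> m" unfolding m_def by (rule min_modulus_nonneg[OF unit])
  define Q where "Q y = P (P y) - m\<^sup>2 *\<^sub>R y" for y
  have "linear (\<lambda>y. P (P y))" using linear_compose[OF linear linear] by (simp add: o_def)
  then have "linear Q" unfolding Q_def by (intro module_hom_sub linear_scaleR)
  have PP: "Re (cinner a (P (P b))) = Re (cinner (P (P a)) b)" for a b
    by (metis positive_op_Re_cinner_commute[OF P_clinear P_pos])
  have Q_sym: "Re (cinner a (Q b)) = Re (cinner (Q a) b)" for a b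
    unfolding Q_def
    by (simp add: cinner_diff_left cinner_diff_right cinner_scaleR_left cinner_scaleR_right PP
        Re_cinner_commute[of a b])
  have Q_form: "Re (cinner y (Q y)) = (norm (P y))\<^sup>2 - m\<^sup>2 * (norm y)\<^sup>2" for y
    using positive_op_Re_cinner_commute[OF P_clinear P_pos, of y "P y"]
    by (simp add: Q_def cinner_diff_right cinner_scaleR_right Re_cinner_self)
  have Q_pos: "0 \<le> Re (cinner y (Q y))" for y
  proof -
    have "m * norm y \<le> norm (P y)"
      unfolding m_def by (rule min_modulus_mult_norm_le[OF linear])
    then have "(m * norm y)\<^sup>2 \<le> (norm (P y))\<^sup>2" using \<open>0 \<le> m\<close> by (simp add: power_mono)
    then show ?thesis by (simp add: Q_form power_mult_distrib)
  qed
  have Q_bound: "norm (Q y) \<le> ((onorm P)\<^sup>2 + m\<^sup>2) * norm y" for y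
  proof -
    have "norm (P (P y)) \<le> (onorm P)\<^sup>2 * norm y"
      using norm_funpow_le[of P "onorm P" 2 y] onorm[OF bounded_linear_P]
        onorm_pos_le[OF bounded_linear_P] by (simp add: numeral_2_eq_2)
    then show ?thesis
      unfolding Q_def using norm_triangle_ineq4[of "P (P y)" "m\<^sup>2 *\<^sub>R y"]
      by (simp add: algebra_simps)
  qed
  have "(norm (Q x))\<^sup>2 \<le> ((onorm P)\<^sup>2 + m\<^sup>2) * Re (cinner x (Q x))"
    by (rule norm_power2_le_Re_cinner[OF \<open>linear Q\<close> Q_sym Q_pos Q_bound]) simp
  then show ?thesis unfolding Q_form by (simp only: Q_def)
qed

lemma min_modulus_defect_le:
  assumes unit: "\<exists>u::'a. norm u = 1"
  defines "m \<equiv> min_modulus P"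
  shows "m\<^sup>2 * (norm (P x - m *\<^sub>R x))\<^sup>2 \<le> ((onorm P)\<^sup>2 + m\<^sup>2) * ((norm (P x))\<^sup>2 - m\<^sup>2 * (norm x)\<^sup>2)"
proof -
  interpret bounded_linear P by (rule bounded_linear_P)
  have "0 \<le> m" unfolding m_def by (rule min_modulus_nonneg[OF unit])
  have "P (P x) - m\<^sup>2 *\<^sub>R x = P (P x - m *\<^sub>R x) + m *\<^sub>R (P x - m *\<^sub>R x)"
    by (simp add: diff scaleR algebra_simps power2_eq_square)
  then have "m * norm (P x - m *\<^sub>R x) \<le> norm (P (P x) - m\<^sup>2 *\<^sub>R x)"
    using norm_add_scaleR_ge[OF \<open>0 \<le> m\<close>] by simp
  then have "m\<^sup>2 * (norm (P x - m *\<^sub>R x))\<^sup>2 \<le> (norm (P (P x) - m\<^sup>2 *\<^sub>R x))\<^sup>2"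
    using \<open>0 \<le> m\<close> by (metis power_mono power_mult_distrib mult_nonneg_nonneg norm_ge_zero)
  also have "\<dots> \<le> ((onorm P)\<^sup>2 + m\<^sup>2) * ((norm (P x))\<^sup>2 - m\<^sup>2 * (norm x)\<^sup>2)"
    unfolding m_def by (rule norm_square_diff_power2_le[OF unit])
  finally show ?thesis .
qed

lemma min_modulus_attained_eigenvector:
  assumes "norm x = 1" and attained: "norm (P x) = min_modulus P"
  shows "P x = min_modulus P *\<^sub>R x"
proof (cases "min_modulus P = 0")
  case False
  have "(min_modulus P)\<^sup>2 * (norm (P x - min_modulus P *\<^sub>R x))\<^sup>2 \<le> 0"
    using min_modulus_defect_le[of x] assms by auto
  with False show ?thesis by (simp add: mult_le_0_iff)
qed (use attained in simp)

lemma approximate_eigenvector: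
  assumes unit: "\<exists>u::'a. norm u = 1" and "0 < \<eta>"
  obtains x where "norm x = 1" "norm (P x - min_modulus P *\<^sub>R x) \<le> \<eta>"
proof -
  define m where "m = min_modulus P"
  define K where "K = (onorm P)\<^sup>2 + m\<^sup>2"
  have "0 \<le> m" unfolding m_def by (rule min_modulus_nonneg[OF unit])
  have "0 \<le> K" unfolding K_def by simp
  show ?thesis
  proof (cases "m = 0")
    case True
    obtain x where "norm x = 1" "norm (P x) < \<eta>"
      using min_modulus_lessE[OF unit, of P \<eta>] \<open>0 < \<eta>\<close> True unfolding m_def by auto
    with True show ?thesis using that unfolding m_def by simp
  next
    case False
    define \<delta> where "\<delta> = m\<^sup>2 * \<eta>\<^sup>2 / (K + 1)"
    have "0 < \<delta>" unfolding \<delta>_def using False \<open>0 < \<eta>\<close> \<open>0 \<le> K\<close> by simp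
    have "m < sqrt (m\<^sup>2 + \<delta>)"
      using \<open>0 < \<delta>\<close> by (intro real_less_rsqrt) simp
    then obtain x where x: "norm x = 1" "norm (P x) < sqrt (m\<^sup>2 + \<delta>)"
      using min_modulus_lessE[OF unit] unfolding m_def by metis
    have "(norm (P x))\<^sup>2 < (sqrt (m\<^sup>2 + \<delta>))\<^sup>2"
      using x(2) by (intro power_strict_mono) simp_all
    then have "K * ((norm (P x))\<^sup>2 - m\<^sup>2 * (norm x)\<^sup>2) \<le> K * \<delta>"
      using \<open>0 < \<delta>\<close> x(1) \<open>0 \<le> K\<close> by (intro mult_left_mono) simp_all
    then have "m\<^sup>2 * (norm (P x - m *\<^sub>R x))\<^sup>2 \<le> K * \<delta>"
      using min_modulus_defect_le[OF unit, of x] unfolding m_def K_def by linarith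
    also have "\<dots> \<le> m\<^sup>2 * \<eta>\<^sup>2"
      unfolding \<delta>_def using \<open>0 \<le> K\<close> by (simp add: field_simps)
    finally have "(norm (P x - m *\<^sub>R x))\<^sup>2 \<le> \<eta>\<^sup>2"
      using False by simp
    then have "norm (P x - m *\<^sub>R x) \<le> \<eta>"
      by (rule power2_le_imp_le) (use \<open>0 < \<eta>\<close> in simp)
    with x(1) show ?thesis using that unfolding m_def by blast
  qed
qed

lemma min_modulus_funpow:
  assumes unit: "\<exists>u::'a. norm u = 1" and "n \<ge> 1"
  shows "min_modulus (P ^^ n) = min_modulus P ^ n"
proof (rule antisym)
  show "min_modulus P ^ n \<le> min_modulus (P ^^ n)"
    using power_min_modulus_le_min_modulus_funpow[OF linear_P unit] .
  obtain k where "n = Suc k" using \<open>n \<ge> 1\<close> by (cases n) auto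
  define m where "m = min_modulus P"
  define C where "C = real n * onorm P ^ k"
  have "0 \<le> m" unfolding m_def by (rule min_modulus_nonneg[OF unit])
  have "m \<le> onorm P"
    using unit min_modulus_le[of _ P] onorm[OF bounded_linear_P] unfolding m_def
    by (metis mult_cancel_left1 order.trans)
  have "0 \<le> C" unfolding C_def using onorm_pos_le[OF bounded_linear_P] by simp
  show "min_modulus (P ^^ n) \<le> m ^ n"
  proof (rule field_le_epsilon)
    fix e :: real assume "0 < e"
    with \<open>0 \<le> C\<close> have "0 < e / (C + 1)" by simp
    then obtain x where x: "norm x = 1" "norm (P x - m *\<^sub>R x) \<le> e / (C + 1)"
      unfolding m_def by (rule approximate_eigenvector[OF unit])
    have "min_modulus (P ^^ n) \<le> norm ((P ^^ n) x)" by (rule min_modulus_le[OF x(1)])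
    also have "\<dots> \<le> norm (m ^ n *\<^sub>R x) + norm ((P ^^ n) x - m ^ n *\<^sub>R x)"
      using norm_triangle_ineq[of "m ^ n *\<^sub>R x" "(P ^^ n) x - m ^ n *\<^sub>R x"] by simp
    also have "\<dots> \<le> m ^ n + C * norm (P x - m *\<^sub>R x)"
      using norm_funpow_diff_power_le[OF bounded_linear_P onorm[OF bounded_linear_P]
          \<open>0 \<le> m\<close> \<open>m \<le> onorm P\<close>, of k x] x(1) \<open>0 \<le> m\<close>
      unfolding C_def \<open>n = Suc k\<close> by simp
    also have "\<dots> \<le> m ^ n + C * (e / (C + 1))"
      using mult_left_mono[OF x(2) \<open>0 \<le> C\<close>] by simp
    also have "\<dots> \<le> m ^ n + e"
      using \<open>0 \<le> C\<close> \<open>0 < e\<close> by (simp add: field_simps)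
    finally show "min_modulus (P ^^ n) \<le> m ^ n + e" .
  qed
qed

lemma property_N_star_funpow_iff:
  assumes "n \<ge> 1"
  shows "property_N_star P \<longleftrightarrow> property_N_star (P ^^ n)"
proof
  assume "property_N_star P"
  then obtain x where x: "norm x = 1" "norm (P x) = min_modulus P"
    unfolding property_N_star_def by auto
  then have "(P ^^ n) x = min_modulus P ^ n *\<^sub>R x"
    by (intro funpow_eigenvector linear_P min_modulus_attained_eigenvector)
  moreover have unit: "\<exists>u::'a. norm u = 1" using x(1) by blast
  ultimately have "norm ((P ^^ n) x) = min_modulus P ^ n"
    using min_modulus_nonneg[OF unit, of P] x(1) by simp
  then have "norm ((P ^^ n) x) = min_modulus (P ^^ n)"
    using min_modulus_funpow[OF unit assms] by simp
  with x(1) show "property_N_star (P ^^ n)" unfolding property_N_star_def by blast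
next
  assume "property_N_star (P ^^ n)"
  then obtain x where x: "norm x = 1" "norm ((P ^^ n) x) = min_modulus (P ^^ n)"
    unfolding property_N_star_def by auto
  then have unit: "\<exists>u::'a. norm u = 1" by blast
  obtain k where "n = Suc k" using assms by (cases n) auto
  have "norm (P x) ^ Suc k \<le> min_modulus P ^ Suc k"
    using power_norm_le_norm_funpow[OF x(1), of n] x(2) min_modulus_funpow[OF unit assms]
      \<open>n = Suc k\<close> by simp
  then have "norm (P x) \<le> min_modulus P"
    using min_modulus_nonneg[OF unit] by (rule power_le_imp_le_base)
  with min_modulus_le[OF x(1), of P] x(1) show "property_N_star P"
    unfolding property_N_star_def by (metis order_antisym)
qed

end

theorem proposition2p10:
  fixes P :: "'a::chilbert_space \<Rightarrow> 'a" and n :: nat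
  assumes "bounded_clinear P" and "positive_op P" and "n \<ge> 1"
  shows "(property_N P \<longleftrightarrow> property_N (P ^^ n))
       \<and> (property_N_star P \<longleftrightarrow> property_N_star (P ^^ n))"
  using property_N_funpow_iff[OF assms] property_N_star_funpow_iff[OF assms] by simp

end
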